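(* Let $r$ be factorizable, $n\ge1$, $\tilde r=r^{(n)}$, and $\tilde{\mathfrak f}_\pm=\mathrm{Im}(\tilde r_\pm)\subset\mathfrak g^n$. If $n=2m$ is even, then $$\tilde{\mathfrak f}_+=\tau(\mathfrak l_r\oplus\underbrace{\mathfrak g_{\rm diag}\oplus\cdots\oplus\mathfrak g_{\rm diag}}_{m-1}),\qquad\tilde{\mathfrak f}_-=\underbrace{\mathfrak g_{\rm diag}\oplus\cdots\oplus\mathfrak g_{\rm diag}}_{m};$$ if $n=2m+1$ is odd, then $$\tilde{\mathfrak f}_+=\mathfrak f_+\oplus\underbrace{\mathfrak g_{\rm diag}\oplus\cdots\oplus\mathfrak g_{\rm diag}}_{m},\qquad\tilde{\mathfrak f}_-=\underbrace{\mathfrak g_{\rm diag}\oplus\cdots\oplus\mathfrak g_{\rm diag}}_{m}\oplus\mathfrak f_-.$$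
   Context: $\mathfrak g$ is a Lie algebra, $r=\sum_ix_i\otimes y_i\in\mathfrak g\otimes\mathfrak g$ a quasitriangular $r$-matrix ($r+r^{21}$ ad-invariant, classical Yang–Baxter equation holds), factorizable meaning $r+r^{21}$ nondegenerate. For any such tensor $s=\sum a_j\otimes b_j$ on a Lie algebra, $s_+(\xi)=\sum_j\langle\xi,a_j\rangle b_j$ and $s_-(\xi)=-\sum_j\langle\xi,b_j\rangle a_j$. $\mathfrak f_\pm=\mathrm{Im}\,r_\pm$; $r^\flat_\pm=r_\pm\circ(r_+-r_-)^{-1}$; $\mathfrak l_r=\{(r^\flat_+(x),r^\flat_-(x)):x\in\mathfrak g\}\subset\mathfrak g\oplus\mathfrak g$; $\mathfrak g_{\rm diag}=\{(x,x)\}\subset\mathfrak g\oplus\mathfrak g$. On $\mathfrak g^n=\mathfrak g\oplus\cdots\oplus\mathfrak g$, for $X\in\mathfrak g^{\otimes l}$ let $(X)_j$ be its image under the embedding of $\mathfrak g$ as the $j$-th summand, and $$r^{(n)}=\sum_{j\ \mathrm{odd}}(r)_j+\sum_{j\ \mathrm{even}}(-r^{21})_j-\sum_{1\le j<k\le n}\sum_i(y_i)_j\wedge(x_i)_k,$$ with $a\wedge b=a\otimes b-b\otimes a$. $\tau$ is the automorphism of $\mathfrak g^n$ given by $\tau(x_1,x_2,x_3,\ldots,x_{n-1},x_n)=(x_1,x_3,\ldots,x_{n-1},x_n,x_2)$, where $\mathfrak l_r\oplus\mathfrak g_{\rm diag}^{m-1}$ is viewed in $\mathfrak g^n$ in the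 obvious order. *)

theory Defs
  imports Complex_Main "HOL-Library.Function_Algebras"
begin

text \<open>Lie algebras over an arbitrary field 'k: the carrier is the whole type 'g,
  with scalar multiplication sc (a vector space) and bracket br.\<close>

definition lie_algebra :: "('k::field \<Rightarrow> 'g::ab_group_add \<Rightarrow> 'g) \<Rightarrow> ('g \<Rightarrow> 'g \<Rightarrow> 'g) \<Rightarrow> bool" where
  "lie_algebra sc br \<longleftrightarrow> Vector_Spaces.vector_space sc \<and>
     (\<forall>x y z. br (x + y) z = br x z + br y z) \<and>
     (\<forall>x y z. br x (y + z) = br x y + br x z) \<and>
     (\<forall>c x y. br (sc c x) y = sc c (br x y)) \<and>
     (\<forall>c x y. br x (sc c y) = sc c (br x y)) \<and>
     (\<forall>x. br x x = 0) \<and>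
     (\<forall>x y z. br x (br y z) + br y (br z x) + br z (br x y) = 0)"

definition dual :: "('k::field \<Rightarrow> 'g::ab_group_add \<Rightarrow> 'g) \<Rightarrow> ('g \<Rightarrow> 'k) set" where
  "dual sc = {\<xi>. Vector_Spaces.linear sc (*) \<xi>}"

definition linear_on :: "('k::field \<Rightarrow> 'v::ab_group_add \<Rightarrow> 'v) \<Rightarrow> 'v set \<Rightarrow> ('v \<Rightarrow> 'k) \<Rightarrow> bool" where
  "linear_on sc V \<xi> \<longleftrightarrow> (\<forall>v\<in>V. \<forall>w\<in>V. \<xi> (v + w) = \<xi> v + \<xi> w) \<and>
                        (\<forall>c. \<forall>v\<in>V. \<xi> (sc c v) = c * \<xi> v)"

text \<open>A tensor s = sum_j a_j \<otimes> b_j is represented by the list of pairs (a_j, b_j).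
  s_+(xi) = sum_j <xi,a_j> b_j,  s_-(xi) = - sum_j <xi,b_j> a_j.\<close>
definition tplus :: "('k \<Rightarrow> 'v::ab_group_add \<Rightarrow> 'v) \<Rightarrow> ('v \<times> 'v) list \<Rightarrow> ('v \<Rightarrow> 'k) \<Rightarrow> 'v" where
  "tplus sc s \<xi> = (\<Sum>(a, b)\<leftarrow>s. sc (\<xi> a) b)"

definition tminus :: "('k \<Rightarrow> 'v::ab_group_add \<Rightarrow> 'v) \<Rightarrow> ('v \<times> 'v) list \<Rightarrow> ('v \<Rightarrow> 'k) \<Rightarrow> 'v" where
  "tminus sc s \<xi> = - (\<Sum>(a, b)\<leftarrow>s. sc (\<xi> b) a)"

definition flip21 :: "('v \<times> 'v) list \<Rightarrow> ('v \<times> 'v) list" where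
  "flip21 s = map (\<lambda>(a, b). (b, a)) s"

text \<open>Vanishing of tensors in g\<otimes>g and g\<otimes>g\<otimes>g, tested against g^* \<otimes> g^* (resp. g^*\<otimes>g^*\<otimes>g^*),
  which separates points of the tensor product over a field.\<close>
definition ad_invariant :: "('k::field \<Rightarrow> 'g::ab_group_add \<Rightarrow> 'g) \<Rightarrow> ('g \<Rightarrow> 'g \<Rightarrow> 'g) \<Rightarrow> ('g \<times> 'g) list \<Rightarrow> bool" where
  "ad_invariant sc br t \<longleftrightarrow> (\<forall>x. \<forall>\<xi>\<in>dual sc. \<forall>\<eta>\<in>dual sc.
      (\<Sum>(a, b)\<leftarrow>t. \<xi> (br x a) * \<eta> b + \<xi> a * \<eta> (br x b)) = 0)"

text \<open>Classical Yang-Baxter equation [r12,r13]+[r12,r23]+[r13,r23] = 0.\<close>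
definition CYBE :: "('k::field \<Rightarrow> 'g::ab_group_add \<Rightarrow> 'g) \<Rightarrow> ('g \<Rightarrow> 'g \<Rightarrow> 'g) \<Rightarrow> ('g \<times> 'g) list \<Rightarrow> bool" where
  "CYBE sc br r \<longleftrightarrow> (\<forall>\<xi>\<in>dual sc. \<forall>\<eta>\<in>dual sc. \<forall>\<zeta>\<in>dual sc.
      (\<Sum>(x1, y1)\<leftarrow>r. \<Sum>(x2, y2)\<leftarrow>r.
          \<xi> (br x1 x2) * \<eta> y1 * \<zeta> y2
        + \<xi> x1 * \<eta> (br y1 x2) * \<zeta> y2
        + \<xi> x1 * \<eta> x2 * \<zeta> (br y1 y2)) = 0)"

definition quasitriangular :: "('k::field \<Rightarrow> 'g::ab_group_add \<Rightarrow> 'g) \<Rightarrow> ('g \<Rightarrow> 'g \<Rightarrow> 'g) \<Rightarrow> ('g \<times> 'g) list \<Rightarrow> bool" where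
  "quasitriangular sc br r \<longleftrightarrow> ad_invariant sc br (r @ flip21 r) \<and> CYBE sc br r"

text \<open>Factorizable: quasitriangular and r + r^{21} nondegenerate, i.e. the induced
  map (r+r^{21})_+ : g^* \<rightarrow> g is bijective.\<close>
definition factorizable :: "('k::field \<Rightarrow> 'g::ab_group_add \<Rightarrow> 'g) \<Rightarrow> ('g \<Rightarrow> 'g \<Rightarrow> 'g) \<Rightarrow> ('g \<times> 'g) list \<Rightarrow> bool" where
  "factorizable sc br r \<longleftrightarrow> quasitriangular sc br r \<and>
     bij_betw (tplus sc (r @ flip21 r)) (dual sc) UNIV"

definition fplus :: "('k::field \<Rightarrow> 'g::ab_group_add \<Rightarrow> 'g) \<Rightarrow> ('g \<times> 'g) list \<Rightarrow> 'g set" where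
  "fplus sc r = tplus sc r ` dual sc"

definition fminus :: "('k::field \<Rightarrow> 'g::ab_group_add \<Rightarrow> 'g) \<Rightarrow> ('g \<times> 'g) list \<Rightarrow> 'g set" where
  "fminus sc r = tminus sc r ` dual sc"

definition rflat_plus :: "('k::field \<Rightarrow> 'g::ab_group_add \<Rightarrow> 'g) \<Rightarrow> ('g \<times> 'g) list \<Rightarrow> 'g \<Rightarrow> 'g" where
  "rflat_plus sc r x = tplus sc r (inv_into (dual sc) (\<lambda>\<xi>. tplus sc r \<xi> - tminus sc r \<xi>) x)"

definition rflat_minus :: "('k::field \<Rightarrow> 'g::ab_group_add \<Rightarrow> 'g) \<Rightarrow> ('g \<times> 'g) list \<Rightarrow> 'g \<Rightarrow> 'g" where
  "rflat_minus sc r x = tminus sc r (inv_into (dual sc) (\<lambda>\<xi>. tplus sc r \<xi> - tminus sc r \<xi>) x)"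

definition l_r :: "('k::field \<Rightarrow> 'g::ab_group_add \<Rightarrow> 'g) \<Rightarrow> ('g \<times> 'g) list \<Rightarrow> ('g \<times> 'g) set" where
  "l_r sc r = {(rflat_plus sc r x, rflat_minus sc r x) | x. True}"

text \<open>g^n: functions nat \<Rightarrow> g supported on {1..n} (index j = j-th summand), with
  pointwise operations.\<close>
definition gn :: "nat \<Rightarrow> (nat \<Rightarrow> 'g::zero) set" where
  "gn n = {v. \<forall>k. (k < 1 \<or> n < k) \<longrightarrow> v k = 0}"

definition scaleN :: "('k \<Rightarrow> 'g \<Rightarrow> 'g) \<Rightarrow> 'k \<Rightarrow> (nat \<Rightarrow> 'g) \<Rightarrow> (nat \<Rightarrow> 'g)" where
  "scaleN sc c v = (\<lambda>k. sc c (v k))"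

definition emb :: "nat \<Rightarrow> 'g::zero \<Rightarrow> (nat \<Rightarrow> 'g)" where
  "emb j x = (\<lambda>k. if k = j then x else 0)"

text \<open>r^{(n)} = sum_{j odd} (r)_j + sum_{j even} (-r^{21})_j - sum_{j<k} sum_i (y_i)_j \<wedge> (x_i)_k\<close>
definition r_n :: "nat \<Rightarrow> ('g::ab_group_add \<times> 'g) list \<Rightarrow> ((nat \<Rightarrow> 'g) \<times> (nat \<Rightarrow> 'g)) list" where
  "r_n n r =
     concat [ (if odd j then [(emb j a, emb j b). (a, b) \<leftarrow> r]
               else [(emb j (- b), emb j a). (a, b) \<leftarrow> r]). j \<leftarrow> [1..<Suc n]]
   @ concat [ [(emb j (- y), emb k x), (emb k x, emb j y)].
               j \<leftarrow> [1..<Suc n], k \<leftarrow> [Suc j..<Suc n], (x, y) \<leftarrow> r]"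

definition fplus_n :: "('k::field \<Rightarrow> 'g::ab_group_add \<Rightarrow> 'g) \<Rightarrow> nat \<Rightarrow> ('g \<times> 'g) list \<Rightarrow> (nat \<Rightarrow> 'g) set" where
  "fplus_n sc n r = tplus (scaleN sc) (r_n n r) ` {\<xi>. linear_on (scaleN sc) (gn n) \<xi>}"

definition fminus_n :: "('k::field \<Rightarrow> 'g::ab_group_add \<Rightarrow> 'g) \<Rightarrow> nat \<Rightarrow> ('g \<times> 'g) list \<Rightarrow> (nat \<Rightarrow> 'g) set" where
  "fminus_n sc n r = tminus (scaleN sc) (r_n n r) ` {\<xi>. linear_on (scaleN sc) (gn n) \<xi>}"

definition tau :: "nat \<Rightarrow> (nat \<Rightarrow> 'g::zero) \<Rightarrow> (nat \<Rightarrow> 'g)" where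
  "tau n w = (\<lambda>k. if k = 1 then w 1
                   else if 2 \<le> k \<and> k < n then w (Suc k)
                   else if k = n then w 2 else 0)"

end

theory Submission
  imports Defs
begin

text \<open>
  A linear functional on g^n is a tuple (xi_1, ..., xi_n) of functionals on g. Put
  zeta = xi_1 + ... + xi_n and R = (r + r^21)_+ = r_+ - r_-. Expanding r^(n) gives
  r~_+(xi)_k = r_-(zeta) + sum_{j >= k} R(xi_j) for odd k and the same with j > k for even k,
  and likewise for r~_- with the parities exchanged. Since R is a bijection from g^* onto g,
  once zeta is fixed the tail sums s_k = sum_{j >= k} R(xi_j), 2 <= k <= n, can be prescribed
  at will (by telescoping), subject only to s_1 = R(zeta) and s_(n+1) = 0. Hence the image of
  r~_+ consists of the vectors that agree on each pair {2i, 2i+1}, have first entry r_+(zeta)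
  and, for even n, last entry r_-(zeta); the image of r~_- consists of the vectors that agree
  on each pair {2i-1, 2i} and, for odd n, have last entry in f_-.
\<close>

lemma sum_list_map_concat: "sum_list (map f (concat xss)) = (\<Sum>xs\<leftarrow>xss. sum_list (map f xs))"
  by (induct xss) auto

lemma sum_split_at:
  fixes f :: "nat \<Rightarrow> 'a::comm_monoid_add"
  assumes "k \<in> {1..n}"
  shows "sum f {1..n} = sum f {1..<k} + f k + sum f {k<..n}"
proof -
  have "{1..n} = insert k ({1..<k} \<union> {k<..n})"
    using assms by auto
  moreover have "sum f ({1..<k} \<union> {k<..n}) = sum f {1..<k} + sum f {k<..n}"
    by (rule sum.union_disjoint) auto
  ultimately show ?thesis
    by (simp add: ac_simps)
qed

lemma sum_upper_triangle_at:
  fixes f g :: "nat \<Rightarrow> 'a::comm_monoid_add"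
  shows "(\<Sum>j\<in>{1..n}. \<Sum>l\<in>{j<..n}. (if k = l then f j else 0) + (if k = j then g l else 0))
       = (if k \<in> {1..n} then sum f {1..<k} + sum g {k<..n} else 0)"
proof -
  have "(\<Sum>j\<in>{1..n}. \<Sum>l\<in>{j<..n}. if k = l then f j else 0)
      = (\<Sum>j\<in>{1..n} \<inter> {j. j < k \<and> k \<le> n}. f j)"
    by (simp add: sum.inter_restrict)
  also have "\<dots> = (if k \<in> {1..n} then sum f {1..<k} else 0)"
    by (auto intro: sum.cong)
  finally have lower: "(\<Sum>j\<in>{1..n}. \<Sum>l\<in>{j<..n}. if k = l then f j else 0)
      = (if k \<in> {1..n} then sum f {1..<k} else 0)" .
  have "(\<Sum>j\<in>{1..n}. \<Sum>l\<in>{j<..n}. if k = j then g l else 0)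
      = (\<Sum>j\<in>{1..n}. if k = j then sum g {j<..n} else 0)"
    by (rule sum.cong) auto
  also have "\<dots> = (if k \<in> {1..n} then sum g {k<..n} else 0)"
    by simp
  finally show ?thesis
    using lower by (simp add: sum.distrib)
qed

lemma tplus_append_flip21: "tplus sc (s @ flip21 s) \<xi> = tplus sc s \<xi> - tminus sc s \<xi>"
  unfolding tplus_def tminus_def flip21_def by (induct s) (auto simp: case_prod_beta)

lemma gn_outside:
  assumes "v \<in> gn n" and "k \<notin> {1..n}"
  shows "v k = 0"
proof -
  from assms(2) have "k < 1 \<or> n < k"
    by auto
  with assms(1) show ?thesis
    unfolding gn_def by blast
qed

definition summand_functional :: "((nat \<Rightarrow> 'g::zero) \<Rightarrow> 'k) \<Rightarrow> nat \<Rightarrow> 'g \<Rightarrow> 'k" where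
  "summand_functional \<xi> j y = \<xi> (emb j y)"

context module
begin

lemma tplus_add: "tplus scale s (\<xi> + \<eta>) = tplus scale s \<xi> + tplus scale s \<eta>"
  unfolding tplus_def by (induct s) (auto simp: scale_left_distrib)

lemma tminus_add: "tminus scale s (\<xi> + \<eta>) = tminus scale s \<xi> + tminus scale s \<eta>"
  unfolding tminus_def by (induct s) (auto simp: scale_left_distrib)

lemma tplus_zero: "tplus scale s 0 = 0"
  unfolding tplus_def by (induct s) auto

lemma tminus_zero: "tminus scale s 0 = 0"
  unfolding tminus_def by (induct s) auto

lemma tplus_sum: "tplus scale s (sum F A) = (\<Sum>a\<in>A. tplus scale s (F a))"
  using sum_comp_morphism[of "tplus scale s" F A, OF tplus_zero tplus_add] by (simp add: o_def)

lemma tminus_sum: "tminus scale s (sum F A) = (\<Sum>a\<in>A. tminus scale s (F a))"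
  using sum_comp_morphism[of "tminus scale s" F A, OF tminus_zero tminus_add] by (simp add: o_def)

lemma tplus_scaleN_apply: "tplus (scaleN scale) L \<xi> k = (\<Sum>(A, B)\<leftarrow>L. scale (\<xi> A) (B k))"
  unfolding tplus_def scaleN_def by (induct L) (auto simp: split_def)

lemma tminus_scaleN_apply: "tminus (scaleN scale) L \<xi> k = - (\<Sum>(A, B)\<leftarrow>L. scale (\<xi> B) (A k))"
  unfolding tminus_def scaleN_def by (induct L) (auto simp: split_def)

lemma tplus_diagonal_block_apply:
  assumes "\<And>y. \<xi> (emb j (- y)) = - \<xi> (emb j y)"
  shows "(\<Sum>(A, B)\<leftarrow>(if odd j then [(emb j a, emb j b). (a, b) \<leftarrow> s]
                     else [(emb j (- b), emb j a). (a, b) \<leftarrow> s]). scale (\<xi> A) (B k))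
   = (if k = j then (if odd j then tplus scale s (summand_functional \<xi> j)
                     else tminus scale s (summand_functional \<xi> j)) else 0)"
proof -
  have "\<xi> (\<lambda>k. if k = j then - y else 0) = - \<xi> (\<lambda>k. if k = j then y else 0)" for y
    using assms by (simp add: emb_def)
  then show ?thesis
    unfolding tplus_def tminus_def summand_functional_def emb_def
    by (induct s) (auto simp: split_def)
qed

lemma tplus_offdiagonal_block_apply:
  assumes "\<And>y. \<xi> (emb j (- y)) = - \<xi> (emb j y)"
  shows "(\<Sum>p\<leftarrow>s. \<Sum>(A, B)\<leftarrow>(case p of (x, y) \<Rightarrow> [(emb j (- y), emb l x), (emb l x, emb j y)]).
      scale (\<xi> A) (B k))
   = (if k = l then tminus scale s (summand_functional \<xi> j) else 0)
     + (if k = j then tplus scale s (summand_functional \<xi> l) else 0)"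
proof -
  have "\<xi> (\<lambda>k. if k = j then - y else 0) = - \<xi> (\<lambda>k. if k = j then y else 0)" for y
    using assms by (simp add: emb_def)
  then show ?thesis
    unfolding tplus_def tminus_def summand_functional_def emb_def
    by (induct s) (auto simp: split_def algebra_simps)
qed

lemma tminus_diagonal_block_apply:
  "(\<Sum>(A, B)\<leftarrow>(if odd j then [(emb j a, emb j b). (a, b) \<leftarrow> s]
                     else [(emb j (- b), emb j a). (a, b) \<leftarrow> s]). scale (\<xi> B) (A k))
   = - (if k = j then (if even j then tplus scale s (summand_functional \<xi> j)
                       else tminus scale s (summand_functional \<xi> j)) else 0)"
  unfolding tplus_def tminus_def summand_functional_def emb_def
  by (induct s) (auto simp: split_def)

lemma tminus_offdiagonal_block_apply:
  "(\<Sum>p\<leftarrow>s. \<Sum>(A, B)\<leftarrow>(case p of (x, y) \<Rightarrow> [(emb j (- y), emb l x), (emb l x, emb j y)]).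
      scale (\<xi> B) (A k))
   = - ((if k = l then tminus scale s (summand_functional \<xi> j) else 0)
        + (if k = j then tplus scale s (summand_functional \<xi> l) else 0))"
  unfolding tplus_def tminus_def summand_functional_def emb_def
  by (induct s) (auto simp: split_def algebra_simps)

lemma tplus_r_n_apply:
  assumes "\<And>j y. j \<in> {1..n} \<Longrightarrow> \<xi> (emb j (- y)) = - \<xi> (emb j y)"
  shows "tplus (scaleN scale) (r_n n s) \<xi> k =
     (\<Sum>j\<in>{1..n}. if k = j then (if odd j then tplus scale s (summand_functional \<xi> j)
                                   else tminus scale s (summand_functional \<xi> j)) else 0)
   + (\<Sum>j\<in>{1..n}. \<Sum>l\<in>{j<..n}. (if k = l then tminus scale s (summand_functional \<xi> j) else 0)
                               + (if k = j then tplus scale s (summand_functional \<xi> l) else 0))"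
  unfolding tplus_scaleN_apply r_n_def
  by (simp only: sum_list_map_concat map_append sum_list_append map_map o_def
      interv_sum_list_conv_sum_set_nat set_upt atLeastLessThanSuc_atLeastAtMost
      atLeastSucLessThan_greaterThanLessThan atLeastSucAtMost_greaterThanAtMost)
    (simp add: tplus_diagonal_block_apply tplus_offdiagonal_block_apply assms cong: sum.cong_simp)

lemma tminus_r_n_apply:
  "tminus (scaleN scale) (r_n n s) \<xi> k =
     (\<Sum>j\<in>{1..n}. if k = j then (if even j then tplus scale s (summand_functional \<xi> j)
                                   else tminus scale s (summand_functional \<xi> j)) else 0)
   + (\<Sum>j\<in>{1..n}. \<Sum>l\<in>{j<..n}. (if k = l then tminus scale s (summand_functional \<xi> j) else 0)
                               + (if k = j then tplus scale s (summand_functional \<xi> l) else 0))"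
  unfolding tminus_scaleN_apply r_n_def
  by (simp only: sum_list_map_concat map_append sum_list_append map_map o_def
      interv_sum_list_conv_sum_set_nat set_upt atLeastLessThanSuc_atLeastAtMost
      atLeastSucLessThan_greaterThanLessThan atLeastSucAtMost_greaterThanAtMost)
    (simp add: tminus_diagonal_block_apply tminus_offdiagonal_block_apply sum_negf sum_subtractf
      sum.distrib)

end

lemma dual_iff:
  assumes "vector_space sc"
  shows "\<xi> \<in> dual sc \<longleftrightarrow> (\<forall>x y. \<xi> (x + y) = \<xi> x + \<xi> y) \<and> (\<forall>c x. \<xi> (sc c x) = c * \<xi> x)"
proof -
  have "vector_space ((*) :: 'a \<Rightarrow> 'a \<Rightarrow> 'a)"
    by unfold_locales (auto simp: algebra_simps)
  then show ?thesis
    unfolding dual_def using assms by (simp add: Vector_Spaces.linear_iff)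
qed

locale nondegenerate_r_matrix =
  fixes sc :: "'k::field \<Rightarrow> 'g::ab_group_add \<Rightarrow> 'g" and r :: "('g \<times> 'g) list"
  assumes vector_space: "vector_space sc"
    and bij_symmetric_part: "bij_betw (tplus sc (r @ flip21 r)) (dual sc) UNIV"
begin

sublocale module sc
  using vector_space by (simp add: module_iff_vector_space)

abbreviation "D \<equiv> dual sc"
abbreviation "rp \<equiv> tplus sc r"
abbreviation "rm \<equiv> tminus sc r"
abbreviation "rs \<equiv> tplus sc (r @ flip21 r)"

lemma rp_eq: "rp \<xi> = rm \<xi> + rs \<xi>"
  by (simp add: tplus_append_flip21)

lemma mem_dual_iff: "\<xi> \<in> D \<longleftrightarrow> (\<forall>x y. \<xi> (x + y) = \<xi> x + \<xi> y) \<and> (\<forall>c x. \<xi> (sc c x) = c * \<xi> x)"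
  using dual_iff[OF vector_space] .

lemma dual_zero: "0 \<in> D"
  by (simp add: mem_dual_iff)

lemma dual_diff: "\<xi> \<in> D \<Longrightarrow> \<eta> \<in> D \<Longrightarrow> \<xi> - \<eta> \<in> D"
  by (simp add: mem_dual_iff algebra_simps)

lemma dual_sum: "(\<And>a. a \<in> A \<Longrightarrow> F a \<in> D) \<Longrightarrow> sum F A \<in> D"
  by (induct A rule: infinite_finite_induct) (auto simp: mem_dual_iff dual_zero algebra_simps)

lemma dual_apply_zero: "\<xi> \<in> D \<Longrightarrow> \<xi> 0 = 0"
  by (metis mem_dual_iff add_cancel_right_right)

lemma dual_apply_uminus: "\<xi> \<in> D \<Longrightarrow> \<xi> (- x) = - \<xi> x"
  by (metis mem_dual_iff dual_apply_zero add_eq_0_iff2)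

definition rs_inv :: "'g \<Rightarrow> 'g \<Rightarrow> 'k" where
  "rs_inv = inv_into D rs"

lemma rs_inv_in_dual: "rs_inv x \<in> D"
  using bij_symmetric_part unfolding rs_inv_def bij_betw_def by (auto intro: inv_into_into)

lemma rs_rs_inv: "rs (rs_inv x) = x"
  using bij_symmetric_part unfolding rs_inv_def bij_betw_def by (metis UNIV_I f_inv_into_f)

lemma rs_inv_rs: "\<xi> \<in> D \<Longrightarrow> rs_inv (rs \<xi>) = \<xi>"
  using bij_symmetric_part unfolding rs_inv_def bij_betw_def by simp

lemma l_r_eq: "l_r sc r = (\<lambda>\<zeta>. (rp \<zeta>, rm \<zeta>)) ` D"
proof -
  have "(\<lambda>\<xi>. rp \<xi> - rm \<xi>) = rs"
    by (simp add: tplus_append_flip21 fun_eq_iff)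
  then have "l_r sc r = (\<lambda>\<zeta>. (rp \<zeta>, rm \<zeta>)) ` range rs_inv"
    unfolding l_r_def rflat_plus_def rflat_minus_def rs_inv_def by auto
  moreover have "range rs_inv = D"
  proof
    show "range rs_inv \<subseteq> D"
      using rs_inv_in_dual by auto
    show "D \<subseteq> range rs_inv"
      using rs_inv_rs by (metis rangeI subsetI)
  qed
  ultimately show ?thesis
    by simp
qed

definition rs_tail :: "nat \<Rightarrow> (nat \<Rightarrow> 'g \<Rightarrow> 'k) \<Rightarrow> nat \<Rightarrow> 'g" where
  "rs_tail n \<eta> k = (\<Sum>j\<in>{k..n}. rs (\<eta> j))"

definition tail_vector :: "nat \<Rightarrow> (nat \<Rightarrow> bool) \<Rightarrow> (nat \<Rightarrow> 'g \<Rightarrow> 'k) \<Rightarrow> nat \<Rightarrow> 'g" where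
  "tail_vector n p \<eta> k =
     (if k \<in> {1..n} then rm (sum \<eta> {1..n}) + rs_tail n \<eta> (if p k then k else Suc k) else 0)"

lemma tail_vector_outside: "k \<notin> {1..n} \<Longrightarrow> tail_vector n p \<eta> k = 0"
  unfolding tail_vector_def by (rule if_not_P)

lemma rs_tail_one: "rs_tail n \<eta> 1 = rs (sum \<eta> {1..n})"
  by (simp add: rs_tail_def tplus_sum)

lemma rs_tail_beyond: "rs_tail n \<eta> (Suc n) = 0"
  by (simp add: rs_tail_def)

lemma partial_sums_eq_rs_tail:
  assumes "k \<in> {1..n}"
  shows "(\<Sum>j\<in>{1..<k}. rm (\<eta> j)) + (if p then rp (\<eta> k) else rm (\<eta> k)) + (\<Sum>j\<in>{k<..n}. rp (\<eta> j))
       = rm (sum \<eta> {1..n}) + rs_tail n \<eta> (if p then k else Suc k)"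
proof -
  have "{k..n} = insert k {k<..n}" "{Suc k..n} = {k<..n}"
    using assms by auto
  then show ?thesis
    using sum_split_at[OF assms, of "\<lambda>j. rm (\<eta> j)"]
    by (simp add: rs_tail_def tminus_sum rp_eq sum.distrib algebra_simps)
qed

lemma r_n_component_eq_tail_vector:
  "(\<Sum>j\<in>{1..n}. if k = j then (if p j then rp (\<eta> j) else rm (\<eta> j)) else 0)
   + (\<Sum>j\<in>{1..n}. \<Sum>l\<in>{j<..n}. (if k = l then rm (\<eta> j) else 0) + (if k = j then rp (\<eta> l) else 0))
   = tail_vector n p \<eta> k"
  unfolding sum_upper_triangle_at sum.delta[OF finite_atLeastAtMost] tail_vector_def
  using partial_sums_eq_rs_tail[of k n \<eta> "p k"] by (simp add: ac_simps)

lemma tplus_r_n_eq_tail_vector: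
  assumes "\<And>j y. j \<in> {1..n} \<Longrightarrow> \<xi> (emb j (- y)) = - \<xi> (emb j y)"
  shows "tplus (scaleN sc) (r_n n r) \<xi> = tail_vector n odd (summand_functional \<xi>)"
  by (rule ext) (simp only: tplus_r_n_apply[of n \<xi>, OF assms] r_n_component_eq_tail_vector)

lemma tminus_r_n_eq_tail_vector:
  "tminus (scaleN sc) (r_n n r) \<xi> = tail_vector n even (summand_functional \<xi>)"
  by (rule ext) (simp only: tminus_r_n_apply r_n_component_eq_tail_vector)

definition dual_tuples :: "nat \<Rightarrow> (nat \<Rightarrow> 'g \<Rightarrow> 'k) set" where
  "dual_tuples n = {\<eta>. \<forall>j\<in>{1..n}. \<eta> j \<in> D}"

lemma summand_functional_in_dual:
  assumes "linear_on (scaleN sc) (gn n) \<xi>" and "j \<in> {1..n}"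
  shows "summand_functional \<xi> j \<in> D"
proof -
  have "emb j y \<in> gn n" for y :: 'g
    using assms(2) by (auto simp: emb_def gn_def)
  moreover have "emb j (x + y) = emb j x + emb j y" "emb j (sc c x) = scaleN sc c (emb j x)" for c x y
    by (auto simp: emb_def scaleN_def fun_eq_iff)
  ultimately show ?thesis
    using assms(1) unfolding mem_dual_iff summand_functional_def linear_on_def by metis
qed

lemma linear_on_sum_summands:
  assumes "\<eta> \<in> dual_tuples n"
  shows "linear_on (scaleN sc) (gn n) (\<lambda>v. \<Sum>j\<in>{1..n}. \<eta> j (v j))"
  using assms unfolding linear_on_def dual_tuples_def
  by (simp add: mem_dual_iff scaleN_def sum.distrib sum_distrib_left)

lemma summand_functional_sum_summands:
  assumes "\<eta> \<in> dual_tuples n" and "j \<in> {1..n}"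
  shows "summand_functional (\<lambda>v. \<Sum>i\<in>{1..n}. \<eta> i (v i)) j = \<eta> j"
proof
  fix y
  have "(\<Sum>i\<in>{1..n}. \<eta> i (emb j y i)) = (\<Sum>i\<in>{1..n}. if i = j then \<eta> j y else 0)"
    using assms by (intro sum.cong) (auto simp: emb_def dual_tuples_def dual_apply_zero)
  then show "summand_functional (\<lambda>v. \<Sum>i\<in>{1..n}. \<eta> i (v i)) j y = \<eta> j y"
    using assms(2) by (simp add: summand_functional_def)
qed

lemma tail_vector_cong:
  "(\<And>j. j \<in> {1..n} \<Longrightarrow> \<eta> j = \<eta>' j) \<Longrightarrow> tail_vector n p \<eta> = tail_vector n p \<eta>'"
  unfolding tail_vector_def rs_tail_def by (auto intro!: sum.cong arg_cong[where f = rm])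

lemma image_linear_on_eq_tail_vector:
  assumes "\<And>\<xi>. linear_on (scaleN sc) (gn n) \<xi> \<Longrightarrow> F \<xi> = tail_vector n p (summand_functional \<xi>)"
  shows "F ` {\<xi>. linear_on (scaleN sc) (gn n) \<xi>} = tail_vector n p ` dual_tuples n"
proof
  show "F ` {\<xi>. linear_on (scaleN sc) (gn n) \<xi>} \<subseteq> tail_vector n p ` dual_tuples n"
    using assms summand_functional_in_dual by (auto simp: dual_tuples_def)
  show "tail_vector n p ` dual_tuples n \<subseteq> F ` {\<xi>. linear_on (scaleN sc) (gn n) \<xi>}"
  proof
    fix v assume "v \<in> tail_vector n p ` dual_tuples n"
    then obtain \<eta> where \<eta>: "\<eta> \<in> dual_tuples n" and v: "v = tail_vector n p \<eta>"
      by blast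
    let ?\<xi> = "\<lambda>v. \<Sum>j\<in>{1..n}. \<eta> j (v j)"
    have "v = tail_vector n p (summand_functional ?\<xi>)"
      unfolding v by (rule tail_vector_cong) (rule summand_functional_sum_summands[OF \<eta>, symmetric])
    then show "v \<in> F ` {\<xi>. linear_on (scaleN sc) (gn n) \<xi>}"
      using assms linear_on_sum_summands[OF \<eta>] by auto
  qed
qed

lemma fplus_n_eq_tail_vector_image: "fplus_n sc n r = tail_vector n odd ` dual_tuples n"
  unfolding fplus_n_def
proof (rule image_linear_on_eq_tail_vector, rule tplus_r_n_eq_tail_vector)
  fix \<xi> j y
  assume "linear_on (scaleN sc) (gn n) \<xi>" "j \<in> {1..n}"
  then show "\<xi> (emb j (- y)) = - \<xi> (emb j y)"
    using summand_functional_in_dual dual_apply_uminus by (metis summand_functional_def)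
qed

lemma fminus_n_eq_tail_vector_image: "fminus_n sc n r = tail_vector n even ` dual_tuples n"
  unfolding fminus_n_def by (rule image_linear_on_eq_tail_vector, rule tminus_r_n_eq_tail_vector)

lemma rs_tail_realization:
  assumes "1 \<le> n" and "\<zeta> \<in> D" and "s 1 = rs \<zeta>" and "s (Suc n) = 0"
  shows "\<exists>\<eta>\<in>dual_tuples n. sum \<eta> {1..n} = \<zeta> \<and> (\<forall>k\<in>{1..Suc n}. rs_tail n \<eta> k = s k)"
proof -
  define \<delta> where "\<delta> j = rs_inv (s j - s (Suc j))" for j
  define \<eta> where "\<eta> j = (if j = 1 then \<zeta> - sum \<delta> {2..n} else \<delta> j)" for j
  have \<delta>: "\<delta> j \<in> D" "rs (\<delta> j) = s j - s (Suc j)" for j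
    by (simp_all add: \<delta>_def rs_inv_in_dual rs_rs_inv)
  have \<eta>: "\<eta> \<in> dual_tuples n"
    by (simp add: dual_tuples_def \<eta>_def \<delta> dual_diff dual_sum assms(2))
  have "{1..n} = insert 1 {2..n}" and "sum \<eta> {2..n} = sum \<delta> {2..n}"
    using assms(1) by (auto simp: \<eta>_def intro: sum.cong)
  then have sum: "sum \<eta> {1..n} = \<zeta>"
    by (simp add: \<eta>_def)
  have "rs_tail n \<eta> k = s k" if k: "k \<in> {1..Suc n}" for k
  proof (cases "k = 1")
    case True
    then show ?thesis
      using rs_tail_one[of n \<eta>] sum assms(3) by simp
  next
    case False
    then have "rs_tail n \<eta> k = (\<Sum>j\<in>{k..<Suc n}. - s (Suc j) - - s j)"
      unfolding rs_tail_def using k by (intro sum.cong) (auto simp: \<eta>_def \<delta>)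
    also have "\<dots> = s k"
      using sum_Suc_diff'[of k "Suc n" "\<lambda>j. - s j"] k assms(4) by simp
    finally show ?thesis .
  qed
  with \<eta> sum show ?thesis
    by blast
qed

lemma sum_dual_tuples: "\<eta> \<in> dual_tuples n \<Longrightarrow> sum \<eta> {1..n} \<in> D"
  by (rule dual_sum) (auto simp: dual_tuples_def)

lemma tail_vector_odd_surj:
  assumes "1 \<le> n" and v: "v \<in> gn n" and \<zeta>: "\<zeta> \<in> D" "v 1 = rp \<zeta>" "even n \<Longrightarrow> v n = rm \<zeta>"
    and pairs: "\<And>i. 0 < i \<Longrightarrow> 2 * i < n \<Longrightarrow> v (2 * i) = v (2 * i + 1)"
  shows "v \<in> tail_vector n odd ` dual_tuples n"
proof -
  obtain \<eta> where \<eta>: "\<eta> \<in> dual_tuples n" "sum \<eta> {1..n} = \<zeta>"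
    and tail: "\<And>k. k \<in> {1..Suc n} \<Longrightarrow> rs_tail n \<eta> k = (if k = Suc n then 0 else v k - rm \<zeta>)"
    using rs_tail_realization[OF assms(1) \<zeta>(1), of "\<lambda>k. if k = Suc n then 0 else v k - rm \<zeta>"]
      assms(1) \<zeta>(2) by (auto simp: rp_eq)
  have "tail_vector n odd \<eta> k = v k" for k
  proof (cases "k \<in> {1..n}")
    case k: True
    show ?thesis
    proof (cases "odd k")
      case True
      then show ?thesis
        using k tail[of k] unfolding tail_vector_def \<eta>(2) by simp
    next
      case False
      then obtain i where "k = 2 * i" "0 < i"
        using k by (auto elim!: evenE)
      then show ?thesis
        using k \<zeta>(3) pairs[of i] tail[of "Suc k"] unfolding tail_vector_def \<eta>(2) by auto
    qed
  next
    case False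
    then show ?thesis
      using gn_outside[OF v False] tail_vector_outside[OF False] by simp
  qed
  then have "v = tail_vector n odd \<eta>"
    by (simp add: fun_eq_iff)
  with \<eta>(1) show ?thesis
    by blast
qed

lemma tail_vector_even_surj:
  assumes "1 \<le> n" and v: "v \<in> gn n" and \<zeta>: "\<zeta> \<in> D" "odd n \<Longrightarrow> v n = rm \<zeta>"
    and pairs: "\<And>i. 0 < i \<Longrightarrow> 2 * i \<le> n \<Longrightarrow> v (2 * i - 1) = v (2 * i)"
  shows "v \<in> tail_vector n even ` dual_tuples n"
proof -
  obtain \<eta> where \<eta>: "\<eta> \<in> dual_tuples n" "sum \<eta> {1..n} = \<zeta>"
    and tail: "\<And>k. k \<in> {1..Suc n} \<Longrightarrow>
      rs_tail n \<eta> k = (if k = 1 then rs \<zeta> else if k = Suc n then 0 else v k - rm \<zeta>)"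
    using rs_tail_realization[OF assms(1) \<zeta>(1),
        of "\<lambda>k. if k = 1 then rs \<zeta> else if k = Suc n then 0 else v k - rm \<zeta>"] assms(1)
    by auto
  have "tail_vector n even \<eta> k = v k" for k
  proof (cases "k \<in> {1..n}")
    case k: True
    show ?thesis
    proof (cases "even k")
      case True
      then have "k \<noteq> 1"
        by auto
      then show ?thesis
        using k True tail[of k] unfolding tail_vector_def \<eta>(2) by simp
    next
      case False
      then obtain i where "k = 2 * i + 1"
        by (auto elim!: oddE)
      then show ?thesis
        using k \<zeta>(2) pairs[of "Suc i"] tail[of "Suc k"] unfolding tail_vector_def \<eta>(2) by auto
    qed
  next
    case False
    then show ?thesis
      using gn_outside[OF v False] tail_vector_outside[OF False] by simp
  qed
  then have "v = tail_vector n even \<eta>"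
    by (simp add: fun_eq_iff)
  with \<eta>(1) show ?thesis
    by blast
qed

lemma tail_vector_odd_image:
  assumes "1 \<le> n"
  shows "tail_vector n odd ` dual_tuples n =
    {v \<in> gn n. \<exists>\<zeta>\<in>D. v 1 = rp \<zeta> \<and> (even n \<longrightarrow> v n = rm \<zeta>) \<and>
                     (\<forall>i. 0 < i \<and> 2 * i < n \<longrightarrow> v (2 * i) = v (2 * i + 1))}"
proof (intro subset_antisym image_subsetI subsetI)
  fix \<eta> assume "\<eta> \<in> dual_tuples n"
  then show "tail_vector n odd \<eta> \<in> {v \<in> gn n. \<exists>\<zeta>\<in>D. v 1 = rp \<zeta> \<and> (even n \<longrightarrow> v n = rm \<zeta>) \<and>
                     (\<forall>i. 0 < i \<and> 2 * i < n \<longrightarrow> v (2 * i) = v (2 * i + 1))}"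
    using assms sum_dual_tuples rs_tail_one[of n \<eta>]
    by (auto simp: tail_vector_def gn_def rs_tail_beyond rp_eq)
qed (use tail_vector_odd_surj[OF assms] in blast)

lemma tail_vector_even_image:
  assumes "1 \<le> n"
  shows "tail_vector n even ` dual_tuples n =
    {v \<in> gn n. (odd n \<longrightarrow> v n \<in> rm ` D) \<and> (\<forall>i. 0 < i \<and> 2 * i \<le> n \<longrightarrow> v (2 * i - 1) = v (2 * i))}"
proof (intro subset_antisym image_subsetI subsetI)
  fix \<eta> assume "\<eta> \<in> dual_tuples n"
  then show "tail_vector n even \<eta> \<in>
    {v \<in> gn n. (odd n \<longrightarrow> v n \<in> rm ` D) \<and> (\<forall>i. 0 < i \<and> 2 * i \<le> n \<longrightarrow> v (2 * i - 1) = v (2 * i))}"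
    using assms sum_dual_tuples by (auto simp: tail_vector_def gn_def rs_tail_beyond dest: odd_pos)
next
  fix v
  assume v: "v \<in> {v \<in> gn n. (odd n \<longrightarrow> v n \<in> rm ` D) \<and>
                             (\<forall>i. 0 < i \<and> 2 * i \<le> n \<longrightarrow> v (2 * i - 1) = v (2 * i))}"
  then obtain \<zeta> where "\<zeta> \<in> D" "odd n \<Longrightarrow> v n = rm \<zeta>"
    using dual_zero by (cases "odd n") auto
  with v show "v \<in> tail_vector n even ` dual_tuples n"
    using tail_vector_even_surj[OF assms] by blast
qed

end

definition tau_inv :: "nat \<Rightarrow> (nat \<Rightarrow> 'g::zero) \<Rightarrow> nat \<Rightarrow> 'g" where
  "tau_inv n v = (\<lambda>k. if k = 1 then v 1 else if k = 2 then v n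
                       else if 3 \<le> k \<and> k \<le> n then v (k - 1) else 0)"

lemma tau_image:
  assumes "2 \<le> n"
  shows "tau n ` {w \<in> gn n. P w} = {v \<in> gn n. P (tau_inv n v)}"
proof -
  have tau_gn: "tau n w \<in> gn n" and tau_inv_gn: "tau_inv n w \<in> gn n" for w :: "nat \<Rightarrow> 'a"
    using assms by (auto simp: gn_def tau_def tau_inv_def)
  have tau_inv_tau: "tau_inv n (tau n w) = w" if "w \<in> gn n" for w :: "nat \<Rightarrow> 'a"
    using assms gn_outside[OF that] by (auto simp: fun_eq_iff tau_def tau_inv_def)
  have tau_tau_inv: "tau n (tau_inv n v) = v" if "v \<in> gn n" for v :: "nat \<Rightarrow> 'a"
    using assms gn_outside[OF that] by (auto simp: fun_eq_iff tau_def tau_inv_def)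
  show ?thesis
  proof (intro set_eqI iffI)
    fix v
    assume "v \<in> tau n ` {w \<in> gn n. P w}"
    then show "v \<in> {v \<in> gn n. P (tau_inv n v)}"
      using tau_gn tau_inv_tau by auto
  next
    fix v
    assume "v \<in> {v \<in> gn n. P (tau_inv n v)}"
    then show "v \<in> tau n ` {w \<in> gn n. P w}"
      using tau_inv_gn tau_tau_inv by (auto intro!: image_eqI[where x = "tau_inv n v"])
  qed
qed

lemma tau_inv_pairs:
  assumes "n = 2 * m"
  shows "(\<forall>i\<in>{2..m}. tau_inv n v (2 * i - 1) = tau_inv n v (2 * i))
     \<longleftrightarrow> (\<forall>i. 0 < i \<and> 2 * i < n \<longrightarrow> v (2 * i) = v (2 * i + 1))"
proof -
  have shifted: "tau_inv n v (2 * Suc i - 1) = v (2 * i)" "tau_inv n v (2 * Suc i) = v (2 * i + 1)"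
    if "0 < i" "2 * i < n" for i
    using that assms by (auto simp: tau_inv_def)
  show ?thesis
  proof
    assume pairs: "\<forall>i\<in>{2..m}. tau_inv n v (2 * i - 1) = tau_inv n v (2 * i)"
    show "\<forall>i. 0 < i \<and> 2 * i < n \<longrightarrow> v (2 * i) = v (2 * i + 1)"
    proof (intro allI impI)
      fix i assume i: "0 < i \<and> 2 * i < n"
      then have "Suc i \<in> {2..m}"
        using assms by auto
      then show "v (2 * i) = v (2 * i + 1)"
        using pairs shifted[of i] i by metis
    qed
  next
    assume pairs: "\<forall>i. 0 < i \<and> 2 * i < n \<longrightarrow> v (2 * i) = v (2 * i + 1)"
    show "\<forall>i\<in>{2..m}. tau_inv n v (2 * i - 1) = tau_inv n v (2 * i)"
    proof
      fix i assume "i \<in> {2..m}"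
      then obtain j where "i = Suc j" "0 < j" "2 * j < n"
        using assms by (cases i) auto
      then show "tau_inv n v (2 * i - 1) = tau_inv n v (2 * i)"
        using pairs shifted[of j] by simp
    qed
  qed
qed

theorem lemma5p1:
  fixes sc :: "'k::field \<Rightarrow> 'g::ab_group_add \<Rightarrow> 'g"
    and br :: "'g \<Rightarrow> 'g \<Rightarrow> 'g"
    and r :: "('g \<times> 'g) list"
    and n :: nat
  assumes "lie_algebra sc br"
    and "factorizable sc br r"
    and "n \<ge> 1"
  shows "(\<forall>m. n = 2 * m \<longrightarrow>
            fplus_n sc n r = tau n ` {w \<in> gn n. (w 1, w 2) \<in> l_r sc r \<and>
                                     (\<forall>i\<in>{2..m}. w (2 * i - 1) = w (2 * i))}
          \<and> fminus_n sc n r = {v \<in> gn n. \<forall>i\<in>{1..m}. v (2 * i - 1) = v (2 * i)})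
       \<and> (\<forall>m. n = 2 * m + 1 \<longrightarrow>
            fplus_n sc n r = {v \<in> gn n. v 1 \<in> fplus sc r \<and>
                                     (\<forall>i\<in>{1..m}. v (2 * i) = v (2 * i + 1))}
          \<and> fminus_n sc n r = {v \<in> gn n. (\<forall>i\<in>{1..m}. v (2 * i - 1) = v (2 * i)) \<and>
                                     v (2 * m + 1) \<in> fminus sc r})"
proof -
  have "vector_space sc"
    using assms(1) by (simp add: lie_algebra_def)
  moreover have "bij_betw (tplus sc (r @ flip21 r)) (dual sc) UNIV"
    using assms(2) by (simp add: factorizable_def)
  ultimately interpret nondegenerate_r_matrix sc r
    by (rule nondegenerate_r_matrix.intro)
  note fplus_n_char = fplus_n_eq_tail_vector_image tail_vector_odd_image[OF assms(3)]
  note fminus_n_char = fminus_n_eq_tail_vector_image tail_vector_even_image[OF assms(3)]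
  show ?thesis
  proof (intro conjI allI impI)
    fix m assume n: "n = 2 * m"
    then have "2 \<le> n"
      using assms(3) by simp
    show "fplus_n sc n r = tau n ` {w \<in> gn n. (w 1, w 2) \<in> l_r sc r \<and>
                                     (\<forall>i\<in>{2..m}. w (2 * i - 1) = w (2 * i))}"
      unfolding fplus_n_char tau_image[OF \<open>2 \<le> n\<close>] tau_inv_pairs[OF n] l_r_eq
      by (auto simp: tau_inv_def n)
    show "fminus_n sc n r = {v \<in> gn n. \<forall>i\<in>{1..m}. v (2 * i - 1) = v (2 * i)}"
      unfolding fminus_n_char by (auto simp: n)
  next
    fix m assume n: "n = 2 * m + 1"
    show "fplus_n sc n r = {v \<in> gn n. v 1 \<in> fplus sc r \<and>
                                     (\<forall>i\<in>{1..m}. v (2 * i) = v (2 * i + 1))}"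
      unfolding fplus_n_char fplus_def by (auto simp: n)
    show "fminus_n sc n r = {v \<in> gn n. (\<forall>i\<in>{1..m}. v (2 * i - 1) = v (2 * i)) \<and>
                                     v (2 * m + 1) \<in> fminus sc r}"
      unfolding fminus_n_char fminus_def by (auto simp: n)
  qed
qed

end
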